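(* In the off-critical regime ($L\gg1$, $L^{-d/(d+1)}\ll\phi\ll1$) or the critical regime ($\phi=\xi L^{-d/(d+1)}$, $L\gg1$), there exist constants $C,R_0<\infty$ such that for any $R\ge R_0$ and $r_\eta\in[R,r_+]$, $$\int_\Omega v_R(|x|-r_\eta)\,dx=L^d(-1+\phi\eta)+r_\eta^{d-2}\big(C_1+O(e^{-R/C})\big)+\epsilon,$$ where $C_1=(d-1)\sigma_d\int_{-\infty}^\infty(\mathrm{sgn}(\xi)+v(\xi))\xi\,d\xi>0$ and $\epsilon=O(e^{-R/C})$ for $d=2,3$, $\epsilon=O(r_\eta^{d-4})$ for $d\ge4$. Consequently, the constant $\alpha(\eta)$ for which $u_\eta(x)=v_R(|x|-r_\eta)+\alpha(\eta)$ belongs to $X_\phi$ satisfies $$\alpha(\eta)=\phi(1-\eta)-\frac{C_1}{L^d}r_\eta^{d-2}\big(1+O(e^{-R/C})\big)-\frac1{L^d}O(r_\eta^{d-4}).$$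
   Context: $\Omega=[-L/2,L/2]^d$ flat torus, $d\ge2$, $|x|$ the Euclidean norm of $x\in[-L/2,L/2]^d$; $X_\phi=\{u\in H^1\cap L^4(\Omega):\frac1{L^d}\int_\Omega u=-1+\phi\}$. $\sigma_d$ = surface area of $S^{d-1}$. $v(x)=-\tanh(x/\sqrt2)$; $v_R$ is an odd function with $v_R=v$ on $|x|<R$, $v_R=-\mathrm{sgn}(x)$ for $|x|>2R$, smooth monotone interpolation on $R\le|x|\le2R$. For $\eta\in[0,1]$, $r_\eta=\eta^{1/d}(\phi d/(2\sigma_d))^{1/d}L$, and $r_+$ is the radius of the ball of volume $V_+=\phi L^d/2$ (i.e. $r_+=r_1$). The $O(\cdot)$ constants are independent of $R,\eta,\phi,L$. *)

theory Defs
  imports "HOL-Analysis.Analysis"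
begin

definition vprof :: "real \<Rightarrow> real" where
  "vprof x = - tanh (x / sqrt 2)"

definition sigma_d :: "nat \<Rightarrow> real" where
  "sigma_d d = 2 * pi powr (real d / 2) / Gamma (real d / 2)"

text \<open>The flat torus Omega = [-L/2, L/2]^d, represented by its fundamental box.\<close>
definition torus_box :: "real \<Rightarrow> 'a::euclidean_space set" where
  "torus_box L = cbox (- ((L / 2) *\<^sub>R One)) ((L / 2) *\<^sub>R One)"

definition C1 :: "nat \<Rightarrow> real" where
  "C1 d = (real d - 1) * sigma_d d * integral UNIV (\<lambda>t. (sgn t + vprof t) * t)"

definition r_eta :: "nat \<Rightarrow> real \<Rightarrow> real \<Rightarrow> real \<Rightarrow> real" where
  "r_eta d L \<phi> \<eta> = \<eta> powr (1 / real d) * (\<phi> * real d / (2 * sigma_d d)) powr (1 / real d) * L"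

definition admissible_vR :: "(real \<Rightarrow> real \<Rightarrow> real) \<Rightarrow> bool" where
  "admissible_vR vR \<longleftrightarrow> (\<forall>R>0.
      (\<forall>x. vR R (- x) = - vR R x)
    \<and> (\<forall>x. \<bar>x\<bar> < R \<longrightarrow> vR R x = vprof x)
    \<and> (\<forall>x. \<bar>x\<bar> > 2 * R \<longrightarrow> vR R x = - sgn x)
    \<and> (\<forall>k x. (deriv ^^ k) (vR R) differentiable (at x))
    \<and> (\<forall>x y. R \<le> x \<longrightarrow> x \<le> y \<longrightarrow> y \<le> 2 * R \<longrightarrow> vR R y \<le> vR R x))"

end

theory Submission
  imports Defs "HOL-Real_Asymp.Real_Asymp"
begin

text \<open>
  The trial function \<open>v_R(|x| - r)\<close> equals \<open>-1\<close> outside the ball of radius \<open>r + 2R\<close>, which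
  fits into the box.  Integrating in polar coordinates and by parts, the box integral becomes
  \<open>-L^d - \<omega>_d\<close> times the integral of \<open>v_R'(t - r) t^d\<close> over \<open>[0, r + 2R]\<close>.  The substitution
  \<open>t = r + s\<close> and the oddness of \<open>v_R\<close> turn this into \<open>-L^d + 2\<omega>_d r^d\<close> plus \<open>\<sigma>_d\<close> times the
  integral of \<open>(v_R(s) + 1) ((r + s)^(d-1) - (r - s)^(d-1))\<close> over \<open>s \<ge> 0\<close>, the second power only
  for \<open>s \<le> r\<close>.  The volume term \<open>2\<omega>_d r^d\<close> is \<open>\<phi>\<eta>L^d\<close>.  The linear part
  \<open>2(d - 1) r^(d-2) s\<close> of the odd kernel produces \<open>C_1 r^(d-2)\<close>, up to the exponentially small
  difference between \<open>v_R\<close> and \<open>v\<close>; its higher odd terms are \<open>O(s^3 r^(d-4))\<close> and vanish for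
  \<open>d \<le> 3\<close>; and the range \<open>s > r\<close> only matters when \<open>r < 2R\<close>, where it is exponentially small
  in \<open>R\<close>.  Solving the mass constraint for \<open>\<alpha>\<close> gives the second expansion.
\<close>


section \<open>Radial integration over the torus box\<close>

definition radial_cone :: "real \<Rightarrow> ('a::real_normed_vector \<times> real) set" where
  "radial_cone M = {p. norm (fst p) \<le> snd p \<and> snd p \<le> M}"

lemma integrable_radial_cone:
  fixes h' :: "real \<Rightarrow> real"
  assumes h'_cont: "continuous_on UNIV h'"
  shows "integrable (lborel \<Otimes>\<^sub>M lborel)
           (\<lambda>(x::'a::euclidean_space, t). indicator (radial_cone M) (x, t) * h' t)"
  unfolding lborel_prod
proof -
  define A :: "('a \<times> real) set" where "A = radial_cone M"
  have A_closed: "closed A" unfolding A_def radial_cone_def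
    by (intro closed_Collect_conj closed_Collect_le continuous_intros)
  have A_sets[measurable]: "A \<in> sets borel" using A_closed by (simp add: borel_closed)
  have "A \<subseteq> cball 0 M \<times> cball 0 M"
    unfolding A_def radial_cone_def by (auto simp: dist_norm) (smt (verit) norm_ge_zero)
  then have A_bounded: "bounded A"
    using bounded_Times[OF bounded_cball bounded_cball] bounded_subset by blast
  obtain B where B: "\<And>t. t \<in> {0..M} \<Longrightarrow> norm (h' t) \<le> B"
    using compact_imp_bounded[OF compact_continuous_image[OF continuous_on_subset[OF h'_cont] compact_Icc]]
    unfolding bounded_iff by blast
  have F_eq: "(\<lambda>(x, t). indicator A (x, t) * h' t) = (\<lambda>p. indicator A p * h' (snd p))" by auto
  have "(\<lambda>p::'a \<times> real. h' (snd p)) \<in> borel_measurable borel"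
    by (intro borel_measurable_continuous_onI continuous_on_compose2[OF h'_cont] continuous_intros) auto
  then have "(\<lambda>p. indicator A p * h' (snd p)) \<in> borel_measurable lborel"
    by (intro borel_measurable_times) (auto simp: measurable_lborel1)
  moreover have "emeasure lborel A < \<infinity>" using emeasure_bounded_finite[OF A_bounded] by simp
  moreover have "norm (indicator A p * h' (snd p)) \<le> B" if "p \<in> A" for p
  proof -
    have "snd p \<in> {0..M}" using that unfolding A_def radial_cone_def by (auto intro: order.trans[OF norm_ge_zero])
    then show ?thesis using B[of "snd p"] that by simp
  qed
  ultimately show "integrable lborel (\<lambda>(x::'a, t). indicator (radial_cone M) (x, t) * h' t)"
    unfolding A_def[symmetric] F_eq
    by (intro integrableI_bounded_set[where A=A and B=B]) auto
qed

lemma integral_radial_cone_height: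
  fixes h h' :: "real \<Rightarrow> real"
  assumes h_deriv: "\<And>t. (h has_real_derivative h' t) (at t)" and h'_cont: "continuous_on UNIV h'"
  shows "(\<integral>t. indicator (radial_cone M) (x, t) * h' t \<partial>lborel) = indicator (cball 0 M) x * (h M - h (norm x))"
proof (cases "norm x \<le> M")
  case True
  have "(\<integral>t. indicator (radial_cone M) (x, t) * h' t \<partial>lborel) = (\<integral>t. indicator {norm x..M} t *\<^sub>R h' t \<partial>lborel)"
    by (intro Bochner_Integration.integral_cong) (auto simp: radial_cone_def split: split_indicator)
  also have "\<dots> = h M - h (norm x)"
    using True
    by (intro integral_FTC_atLeastAtMost continuous_on_subset[OF h'_cont])
       (auto intro: has_field_derivative_imp_has_derivative h_deriv
          has_real_derivative_iff_has_vector_derivative[THEN iffD1] has_vector_derivative_at_within)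
  finally show ?thesis using True by (simp add: dist_norm)
next
  case False
  then have "indicator (radial_cone M) (x, t) = (0::real)" for t by (auto simp: radial_cone_def indicator_def)
  then show ?thesis using False by (simp add: dist_norm)
qed

lemma integral_radial_cone_base:
  fixes h' :: "real \<Rightarrow> real"
  shows "(\<integral>x. indicator (radial_cone M) (x::'a::euclidean_space, t) * h' t \<partial>lborel)
          = indicator {0..M} t * (h' t * unit_ball_vol DIM('a) * t ^ DIM('a))"
proof (cases "t \<in> {0..M}")
  case True
  have "(\<integral>x. indicator (radial_cone M) (x::'a, t) * h' t \<partial>lborel) = (\<integral>x. indicator (cball (0::'a) t) x * h' t \<partial>lborel)"
    using True by (intro Bochner_Integration.integral_cong) (auto simp: radial_cone_def split: split_indicator)
  also have "\<dots> = measure lborel (cball (0::'a) t) * h' t"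
    by simp
  also have "measure lborel (cball (0::'a) t) = unit_ball_vol DIM('a) * t ^ DIM('a)"
    using True content_cball[of t "0::'a"] by simp
  finally show ?thesis using True by simp
next
  case False
  then have "indicator (radial_cone M) (x, t) = (0::real)" for x :: 'a
    by (auto simp: radial_cone_def indicator_def) (smt (verit) norm_ge_zero)
  then show ?thesis using False by simp
qed

lemma integral_radial_cball:
  fixes h h' :: "real \<Rightarrow> real" and M :: real
  assumes M: "M \<ge> 0"
    and h_deriv: "\<And>t. (h has_real_derivative h' t) (at t)"
    and h'_cont: "continuous_on UNIV h'"
  shows "integrable lborel (\<lambda>x::'a::euclidean_space. indicator (cball 0 M) x * (h (norm x) - h M))"
    and "(\<integral>x. indicator (cball 0 M) x * (h (norm x) - h M) \<partial>(lborel::'a measure))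
         = - unit_ball_vol DIM('a) * integral {0..M} (\<lambda>t. h' t * t ^ DIM('a))"
proof -
  \<comment> \<open>Fubini on the cone \<open>norm x \<le> t \<le> M\<close>: integrating \<open>h' t\<close> first in \<open>t\<close> gives \<open>h M - h (norm x)\<close>,
      first in \<open>x\<close> the volume of the ball of radius \<open>t\<close>.\<close>
  define F where "F = (\<lambda>(x::'a) t. indicator (radial_cone M) (x, t) * h' t)"
  have F_int: "integrable (lborel \<Otimes>\<^sub>M lborel) (case_prod F)"
    using integrable_radial_cone[OF h'_cont] by (simp add: F_def case_prod_unfold)
  have height: "(\<integral>t. F x t \<partial>lborel) = indicator (cball 0 M) x * (h M - h (norm x))" for x
    using integral_radial_cone_height[OF h_deriv h'_cont] by (simp add: F_def)
  have base: "(\<integral>x. F x t \<partial>lborel) = indicator {0..M} t * (h' t * unit_ball_vol DIM('a) * t ^ DIM('a))" for t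
    using integral_radial_cone_base[where 'a='a] by (simp add: F_def)
  have "integrable lborel (\<lambda>x::'a. \<integral>t. F x t \<partial>lborel)"
    using lborel_pair.integrable_fst'[OF F_int] by simp
  from integrable_minus[OF this]
  show "integrable lborel (\<lambda>x::'a. indicator (cball 0 M) x * (h (norm x) - h M))"
    unfolding height by (simp add: algebra_simps)
  have "(\<integral>x. indicator (cball 0 M) x * (h (norm x) - h M) \<partial>(lborel::'a measure))
       = - (\<integral>x. (\<integral>t. F x t \<partial>lborel) \<partial>lborel)"
    unfolding height by (simp add: algebra_simps flip: integral_minus)
  also have "(\<integral>x. (\<integral>t. F x t \<partial>lborel) \<partial>lborel) = (\<integral>t. (\<integral>x. F x t \<partial>lborel) \<partial>lborel)"
    using lborel_pair.Fubini_integral[OF F_int] by simp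
  also have "\<dots> = (\<integral>t. indicator {0..M} t *\<^sub>R (h' t * unit_ball_vol DIM('a) * t ^ DIM('a)) \<partial>lborel)"
    unfolding base by simp
  also have "\<dots> = integral {0..M} (\<lambda>t. h' t * unit_ball_vol DIM('a) * t ^ DIM('a))"
  proof -
    have "continuous_on {0..M} (\<lambda>t. h' t * unit_ball_vol DIM('a) * t ^ DIM('a))"
      by (intro continuous_intros continuous_on_subset[OF h'_cont]) auto
    then show ?thesis
      using set_borel_integral_eq_integral(2)[OF borel_integrable_atLeastAtMost'[of 0 M "\<lambda>t. h' t * unit_ball_vol DIM('a) * t ^ DIM('a)"]]
      by (auto simp: set_lebesgue_integral_def)
  qed
  also have "\<dots> = unit_ball_vol DIM('a) * integral {0..M} (\<lambda>t. h' t * t ^ DIM('a))"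
    by (simp add: mult.commute mult.left_commute flip: integral_mult_right)
  finally show "(\<integral>x. indicator (cball 0 M) x * (h (norm x) - h M) \<partial>(lborel::'a measure))
         = - unit_ball_vol DIM('a) * integral {0..M} (\<lambda>t. h' t * t ^ DIM('a))" by simp
qed

lemma measure_torus_box:
  assumes "L \<ge> 0"
  shows "measure lborel (torus_box L :: 'a::euclidean_space set) = L ^ DIM('a)"
proof -
  have le: "\<forall>i\<in>(Basis::'a set). (- ((L / 2) *\<^sub>R One)) \<bullet> i \<le> ((L / 2) *\<^sub>R One) \<bullet> i"
    using assms by simp
  have "measure lborel (torus_box L :: 'a set) = (\<Prod>i\<in>(Basis::'a set). ((L / 2) *\<^sub>R One) \<bullet> i - (- ((L / 2) *\<^sub>R One)) \<bullet> i)"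
    unfolding torus_box_def content_cbox_cases by (rule if_P[OF le])
  also have "\<dots> = (\<Prod>i\<in>(Basis::'a set). L)"
    by (intro prod.cong refl) simp
  finally show ?thesis by simp
qed

lemma integral_torus_box_add_const:
  fixes f :: "'a::euclidean_space \<Rightarrow> real"
  assumes "f integrable_on torus_box L" "L \<ge> 0"
  shows "integral (torus_box L) (\<lambda>x. f x + c) = integral (torus_box L) f + c * L ^ DIM('a)"
proof -
  have "integral (torus_box L) (\<lambda>x. f x + c) = integral (torus_box L) f + integral (torus_box L :: 'a set) (\<lambda>x. c)"
    using assms(1) by (intro integral_add) (auto simp: torus_box_def)
  also have "integral (torus_box L :: 'a set) (\<lambda>x. c) = c * L ^ DIM('a)"
    using measure_torus_box[OF assms(2), where 'a='a] by (simp add: torus_box_def)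
  finally show ?thesis .
qed

lemma cball_subset_torus_box:
  assumes "M \<le> L / 2"
  shows "cball (0::'a::euclidean_space) M \<subseteq> torus_box L"
proof
  fix x :: 'a assume "x \<in> cball 0 M"
  then have nx: "norm x \<le> L / 2" using assms by simp
  show "x \<in> torus_box L"
    unfolding torus_box_def mem_box
  proof
    fix i :: 'a assume i: "i \<in> Basis"
    have "\<bar>x \<bullet> i\<bar> \<le> L / 2" using Basis_le_norm[OF i, of x] nx by simp
    then show "(- ((L / 2) *\<^sub>R One)) \<bullet> i \<le> x \<bullet> i \<and> x \<bullet> i \<le> ((L / 2) *\<^sub>R One) \<bullet> i"
      using i by (auto simp: abs_le_iff)
  qed
qed

lemma sigma_d_pos: "d > 0 \<Longrightarrow> sigma_d d > 0"
  unfolding sigma_d_def by (intro divide_pos_pos Gamma_real_pos) auto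

lemma unit_ball_vol_mult_dim:
  assumes d: "d > 0"
  shows "unit_ball_vol (real d) * real d = sigma_d d"
proof -
  have "Gamma (real d / 2 + 1) = (real d / 2) * Gamma (real d / 2)"
  proof -
    have "real d / 2 \<notin> \<int>\<^sub>\<le>\<^sub>0" using d by (auto dest: nonpos_Ints_nonpos)
    then show ?thesis using Gamma_plus1[of "real d / 2"] by simp
  qed
  moreover have "Gamma (real d / 2) > 0" using d by (intro Gamma_real_pos) auto
  ultimately show ?thesis using d unfolding unit_ball_vol_def sigma_d_def by (simp only:) (simp add: field_simps)
qed

lemma power_le_exp:
  fixes x :: real assumes "x \<ge> 0"
  shows "x ^ n \<le> real n ^ n * exp x"
proof (cases "n = 0")
  case True then show ?thesis using assms by simp
next
  case False
  have "(x / real n) ^ n \<le> (1 + x / real n) ^ n"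
    using assms by (intro power_mono) auto
  also have "\<dots> \<le> exp x"
    using assms False by (intro exp_ge_one_plus_x_over_n_power_n) auto
  finally have "x ^ n / real n ^ n \<le> exp x" by (simp add: power_divide)
  then show ?thesis using False by (simp add: field_simps)
qed

lemma power_le_exp_half:
  fixes R :: real assumes "R \<ge> 0"
  shows "R ^ k \<le> 2 ^ k * real k ^ k * exp (R / 2)"
proof -
  have "(R / 2) ^ k \<le> real k ^ k * exp (R / 2)" using assms by (intro power_le_exp) auto
  then show ?thesis by (simp add: power_divide field_simps)
qed

lemma has_integral_x_exp_tail:
  fixes a :: real assumes "a \<ge> 0"
  shows "((\<lambda>s. 2 * s * exp (- s)) has_integral (2 * (a + 1) * exp (- a))) {a..}"
proof (rule has_integral_to_inf)
  show "(\<lambda>s. 2 * s * exp (- s)) integrable_on {a..y}" for y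
    by (intro integrable_continuous_interval continuous_intros)
  show "0 \<le> 2 * y * exp (- y)" if "a \<le> y" for y using that assms by simp
  have "((\<lambda>s. 2 * s * exp (- s)) has_integral (2 * (a + 1) * exp (- a) - 2 * (y + 1) * exp (- y))) {a..y}"
    if "a \<le> y" for y
  proof -
    have "((\<lambda>s. -2 * (s + 1) * exp (- s)) has_vector_derivative (2 * s * exp (- s))) (at s within {a..y})" for s
      unfolding has_real_derivative_iff_has_vector_derivative[symmetric]
      by (auto intro!: derivative_eq_intros simp: algebra_simps)
    from fundamental_theorem_of_calculus[OF that this] show ?thesis by (simp add: algebra_simps)
  qed
  then have "\<forall>\<^sub>F y in at_top. integral {a..y} (\<lambda>s. 2 * s * exp (- s)) = 2 * (a + 1) * exp (- a) - 2 * (y + 1) * exp (- y)"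
    using eventually_at_top_linorder by (auto intro!: exI[of _ a] integral_unique)
  moreover have "((\<lambda>y::real. 2 * (a + 1) * exp (- a) - 2 * (y + 1) * exp (- y)) \<longlongrightarrow> 2 * (a + 1) * exp (- a)) at_top"
    by real_asymp
  ultimately show "((\<lambda>y. integral {a..y} (\<lambda>s. 2 * s * exp (- s))) \<longlongrightarrow> 2 * (a + 1) * exp (- a)) at_top"
    by (simp add: filterlim_cong tendsto_cong)
qed

lemma integral_exp_cube_le:
  fixes c :: real assumes c: "c \<ge> 0"
  shows "integral {0..c} (\<lambda>s. 2 * exp (- s / 2) * s ^ 3) \<le> 13824"
proof -
  have "integral {0..c} (\<lambda>s. 2 * exp (- s / 2) * s ^ 3) \<le> integral {0..c} (\<lambda>s. 3456 * exp (- s / 4))"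
  proof (intro integral_le integrable_continuous_interval continuous_intros)
    fix s :: real assume s: "s \<in> {0..c}"
    have "(s / 4) ^ 3 \<le> real 3 ^ 3 * exp (s / 4)" using s by (intro power_le_exp) auto
    then have "s ^ 3 \<le> 1728 * exp (s / 4)" by (simp add: power_divide)
    then have "2 * exp (- s / 2) * s ^ 3 \<le> 2 * exp (- s / 2) * (1728 * exp (s / 4))"
      by (intro mult_left_mono) auto
    also have "\<dots> = 3456 * exp (- s / 4)" by (simp flip: exp_add)
    finally show "2 * exp (- s / 2) * s ^ 3 \<le> 3456 * exp (- s / 4)" .
  qed auto
  also have "\<dots> \<le> 13824"
  proof -
    have "((\<lambda>s. exp (- s / 4)) has_integral (- 4 * exp (- c / 4) - (- 4 * exp (- 0 / 4)))) {0..c}"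
    proof (intro fundamental_theorem_of_calculus c)
      fix t :: real
      have "((\<lambda>s. - 4 * exp (- s / 4)) has_real_derivative exp (- t / 4)) (at t)"
        by (auto intro!: derivative_eq_intros)
      then show "((\<lambda>s. - 4 * exp (- s / 4)) has_vector_derivative exp (- t / 4)) (at t within {0..c})"
        by (simp add: has_real_derivative_iff_has_vector_derivative[symmetric] has_field_derivative_at_within)
    qed
    then show ?thesis by (simp add: integral_unique)
  qed
  finally show ?thesis .
qed

lemma integral_power_interval:
  fixes a b :: real assumes "a \<le> b"
  shows "integral {a..b} (\<lambda>t. t ^ n) = (b ^ Suc n - a ^ Suc n) / real (Suc n)"
proof -
  have "((\<lambda>t. t ^ n) has_integral (b ^ Suc n / real (Suc n) - a ^ Suc n / real (Suc n))) {a..b}"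
  proof (intro fundamental_theorem_of_calculus assms)
    fix t :: real
    have "((\<lambda>t. t ^ Suc n / real (Suc n)) has_real_derivative t ^ n) (at t)"
      using DERIV_cdivide[OF DERIV_pow[of "Suc n" t], of "real (Suc n)"] by simp
    then show "((\<lambda>t. t ^ Suc n / real (Suc n)) has_vector_derivative t ^ n) (at t within {a..b})"
      by (simp add: has_real_derivative_iff_has_vector_derivative[symmetric] has_field_derivative_at_within)
  qed
  then show ?thesis by (simp add: integral_unique diff_divide_distrib)
qed

lemma binomial_diff_eq_odd_sum:
  fixes r s :: real assumes n: "n \<ge> 3"
  shows "(r + s) ^ n - (r - s) ^ n - 2 * real n * r ^ (n - 1) * s
           = (\<Sum>k\<in>{3..n}. real (n choose k) * (1 - (-1) ^ k) * s ^ k * r ^ (n - k))"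
proof -
  define f where "f k = real (n choose k) * (1 - (-1) ^ k) * s ^ k * r ^ (n - k)" for k
  have "(r + s) ^ n = (\<Sum>k\<le>n. real (n choose k) * s ^ k * r ^ (n - k))"
    using binomial_ring[of s r n] by (simp add: add.commute)
  moreover have "(r - s) ^ n = (\<Sum>k\<le>n. real (n choose k) * (- s) ^ k * r ^ (n - k))"
    using binomial_ring[of "- s" r n] by simp
  ultimately have "(r + s) ^ n - (r - s) ^ n = sum f {..n}"
    unfolding f_def by (simp add: power_minus[of s] algebra_simps flip: sum_subtractf)
  also have "{..n} = {0..n}" by auto
  also have "sum f {0..n} = f 0 + (f 1 + (f 2 + sum f {3..n}))"
    using n by (simp add: sum.atLeast_Suc_atMost numeral_3_eq_3 numeral_2_eq_2)
  finally show ?thesis by (simp add: f_def)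
qed

lemma binomial_odd_remainder_bound:
  fixes r s :: real and n :: nat
  assumes s: "0 \<le> s" "s \<le> r"
  shows "\<bar>(r + s) ^ n - (r - s) ^ n - 2 * real n * r ^ (n - 1) * s\<bar>
           \<le> (if n \<le> 2 then 0 else 2 ^ (n + 1) * s ^ 3 * r ^ (n - 3))"
proof (cases "n \<le> 2")
  case True
  then have "n = 0 \<or> n = 1 \<or> n = 2" by auto
  then show ?thesis
  proof (elim disjE)
    assume "n = 2" then show ?thesis by (simp add: power2_eq_square algebra_simps del: power_minus)
  qed auto
next
  case False
  have termwise: "\<bar>real (n choose k) * (1 - (-1) ^ k) * s ^ k * r ^ (n - k)\<bar> \<le> 2 * real (n choose k) * (s ^ 3 * r ^ (n - 3))"
    if k: "k \<in> {3..n}" for k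
  proof -
    have "s ^ k * r ^ (n - k) = s ^ 3 * (s ^ (k - 3) * r ^ (n - k))"
      using k by (simp add: power_add[symmetric])
    also have "\<dots> \<le> s ^ 3 * (r ^ (k - 3) * r ^ (n - k))"
      using s by (intro mult_left_mono mult_right_mono power_mono) auto
    also have "r ^ (k - 3) * r ^ (n - k) = r ^ (n - 3)"
      using k by (simp add: power_add[symmetric])
    finally have le: "s ^ k * r ^ (n - k) \<le> s ^ 3 * r ^ (n - 3)" .
    have sign: "\<bar>1 - (-1::real) ^ k\<bar> \<le> 2" by (cases "even k") auto
    have "\<bar>real (n choose k) * (1 - (-1) ^ k) * s ^ k * r ^ (n - k)\<bar>
        = real (n choose k) * \<bar>1 - (-1::real) ^ k\<bar> * (s ^ k * r ^ (n - k))"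
      using s by (simp add: abs_mult mult.assoc)
    also have "\<dots> \<le> real (n choose k) * 2 * (s ^ k * r ^ (n - k))"
      using s sign by (intro mult_right_mono mult_left_mono) auto
    also have "\<dots> \<le> real (n choose k) * 2 * (s ^ 3 * r ^ (n - 3))"
      using le by (intro mult_left_mono) auto
    finally show ?thesis by simp
  qed
  have "n \<ge> 3" using False by simp
  have "\<bar>(r + s) ^ n - (r - s) ^ n - 2 * real n * r ^ (n - 1) * s\<bar>
      \<le> (\<Sum>k\<in>{3..n}. 2 * real (n choose k) * (s ^ 3 * r ^ (n - 3)))"
    unfolding binomial_diff_eq_odd_sum[OF \<open>n \<ge> 3\<close>] by (rule order.trans[OF sum_abs sum_mono], rule termwise)
  also have "\<dots> = 2 * (s ^ 3 * r ^ (n - 3)) * (\<Sum>k\<in>{3..n}. real (n choose k))"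
    by (simp add: sum_distrib_left mult_ac)
  also have "(\<Sum>k\<in>{3..n}. real (n choose k)) \<le> (\<Sum>k\<le>n. real (n choose k))"
    by (intro sum_mono2) auto
  also have "(\<Sum>k\<le>n. real (n choose k)) = 2 ^ n"
    using choose_row_sum[of n] by (metis of_nat_numeral of_nat_power of_nat_sum)
  finally have "\<bar>(r + s) ^ n - (r - s) ^ n - 2 * real n * r ^ (n - 1) * s\<bar> \<le> 2 * (s ^ 3 * r ^ (n - 3)) * 2 ^ n"
    using s by (simp add: mult_left_mono)
  then show ?thesis using False by (simp add: mult_ac)
qed

lemma power_sum_minus_linear_bound:
  fixes r s a :: real
  assumes n: "n \<ge> 1" and "0 \<le> r" "0 \<le> s" "r + s \<le> a"
  shows "\<bar>(r + s) ^ n - 2 * real n * r ^ (n - 1) * s\<bar> \<le> (1 + 2 * real n) * a ^ n"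
proof -
  have "r ^ (n - 1) * s \<le> a ^ (n - 1) * a" using assms by (intro mult_mono power_mono) auto
  also have "a ^ (n - 1) * a = a ^ n" using n by (simp add: power_Suc2[symmetric])
  finally have linear: "r ^ (n - 1) * s \<le> a ^ n" .
  have "\<bar>(r + s) ^ n - 2 * real n * r ^ (n - 1) * s\<bar> \<le> (r + s) ^ n + 2 * real n * (r ^ (n - 1) * s)"
    using assms by (simp add: abs_le_iff mult_ac)
  also have "\<dots> \<le> a ^ n + 2 * real n * a ^ n"
    using assms linear by (intro add_mono mult_left_mono power_mono) auto
  finally show ?thesis by (simp add: algebra_simps)
qed

lemma continuous_eq_on_closure:
  fixes f g :: "'a::topological_space \<Rightarrow> 'b::t2_space"
  assumes "continuous_on UNIV f" "continuous_on UNIV g" "\<And>y. y \<in> S \<Longrightarrow> f y = g y" "x \<in> closure S"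
  shows "f x = g x"
proof -
  have "closure S \<subseteq> {y. f y = g y}"
    using assms(3) by (intro closure_minimal closed_Collect_eq assms(1,2)) auto
  then show ?thesis using assms(4) by auto
qed

lemma powr_inverse_power:
  fixes x :: real assumes "x \<ge> 0" "d > 0"
  shows "(x powr (1 / real d)) ^ d = x"
proof (cases "x = 0")
  case True then show ?thesis using assms by simp
next
  case False
  then show ?thesis using assms by (simp add: powr_realpow[symmetric] powr_powr)
qed

lemma powr_of_nat_diff:
  fixes r :: real assumes "r > 0" "k \<le> d"
  shows "r powr (real d - real k) = r ^ (d - k)"
  using assms by (simp add: powr_realpow[symmetric] of_nat_diff)

section \<open>The profile \<open>v\<close> and its first moment\<close>

lemma vprof_ge_minus_one: "vprof x \<ge> -1"
  unfolding vprof_def using tanh_real_lt_1[of "x / sqrt 2"] by simp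

lemma one_plus_vprof_le_exp:
  fixes s :: real assumes "s \<ge> 0"
  shows "1 + vprof s \<le> 2 * exp (- s)"
proof -
  define x where "x = s / sqrt 2"
  have "1 + vprof s = 2 * exp (-2 * x) / (1 + exp (-2 * x))"
  proof -
    have "1 + exp (-2 * x) > 0" by (simp add: add_pos_pos)
    then show ?thesis unfolding vprof_def x_def[symmetric] tanh_real_altdef by (simp add: field_simps)
  qed
  also have "\<dots> \<le> 2 * exp (-2 * x)"
    by (simp add: divide_le_eq add_pos_pos)
  also have "\<dots> \<le> 2 * exp (- s)"
  proof -
    have "2 * x = sqrt 2 * s" unfolding x_def by (simp add: field_simps real_sqrt_mult[symmetric])
    also have "\<dots> \<ge> s" using assms by (simp add: mult_le_cancel_right1)
    finally show ?thesis by simp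
  qed
  finally show ?thesis .
qed

lemma continuous_on_vprof: "continuous_on S vprof"
  unfolding vprof_def by (intro continuous_intros) (auto simp: cosh_real_pos)

lemma vprof_antimono: "x \<le> y \<Longrightarrow> vprof y \<le> vprof x"
  unfolding vprof_def by (simp add: divide_right_mono)

lemma vprof_minus: "vprof (- x) = - vprof x"
  unfolding vprof_def by simp

definition vprof_moment_density :: "real \<Rightarrow> real" where
  "vprof_moment_density s = (1 + vprof s) * s"

definition vprof_moment :: real where
  "vprof_moment = integral {0..} vprof_moment_density"

lemma continuous_on_vprof_moment_density: "continuous_on S vprof_moment_density"
  unfolding vprof_moment_density_def by (intro continuous_intros continuous_on_vprof)

lemma vprof_moment_density_tail:
  fixes a :: real assumes "a \<ge> 0"
  shows "vprof_moment_density absolutely_integrable_on {a..}"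
    and "vprof_moment_density integrable_on {a..}"
    and "0 \<le> integral {a..} vprof_moment_density"
    and "integral {a..} vprof_moment_density \<le> 2 * (a + 1) * exp (- a)"
proof -
  have bound: "norm (vprof_moment_density s) \<le> 2 * s * exp (- s)" if "s \<in> {a..}" for s
  proof -
    have s: "s \<ge> 0" using that assms by auto
    have "norm (vprof_moment_density s) = (1 + vprof s) * s"
      unfolding vprof_moment_density_def using vprof_ge_minus_one[of s] s by simp
    also have "\<dots> \<le> 2 * exp (- s) * s" using one_plus_vprof_le_exp[OF s] s by (intro mult_right_mono) auto
    finally show ?thesis by (simp add: mult_ac)
  qed
  note tail = has_integral_x_exp_tail[OF assms]
  show abs_int: "vprof_moment_density absolutely_integrable_on {a..}"
    by (rule measurable_bounded_by_integrable_imp_absolutely_integrable[OF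
          continuous_imp_measurable_on_sets_lebesgue[OF continuous_on_vprof_moment_density]
          _ has_integral_integrable[OF tail] bound])
       auto
  then show int: "vprof_moment_density integrable_on {a..}"
    using set_lebesgue_integral_eq_integral(1) by blast
  have "0 \<le> 1 + vprof s" for s using vprof_ge_minus_one[of s] by simp
  then show "0 \<le> integral {a..} vprof_moment_density"
    using int assms by (intro integral_nonneg) (auto simp: vprof_moment_density_def)
  have "integral {a..} vprof_moment_density \<le> integral {a..} (\<lambda>s. 2 * s * exp (- s))"
    using bound int tail by (intro integral_le) (auto simp: abs_le_iff)
  then show "integral {a..} vprof_moment_density \<le> 2 * (a + 1) * exp (- a)"
    using tail integral_unique by metis
qed

lemma vprof_moment_tail_le:
  fixes R :: real assumes "R \<ge> 0"
  shows "integral {2 * R..} vprof_moment_density \<le> 4 * exp (- R)"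
proof -
  have "integral {2 * R..} vprof_moment_density \<le> 2 * (2 * R + 1) * exp (- (2 * R))"
    using vprof_moment_density_tail(4)[of "2 * R"] assms by simp
  also have "\<dots> \<le> 2 * (2 * exp R) * exp (- (2 * R))"
  proof -
    have "2 * R + 1 \<le> 2 * exp R" using exp_ge_add_one_self[of R] assms by linarith
    then show ?thesis by (intro mult_right_mono mult_left_mono) auto
  qed
  also have "\<dots> = 4 * exp (- R)" by (simp add: mult.assoc flip: exp_add)
  finally show ?thesis .
qed

lemma vprof_moment_split:
  fixes a :: real assumes "a \<ge> 0"
  shows "vprof_moment = integral {0..a} vprof_moment_density + integral {a..} vprof_moment_density"
proof -
  have "(vprof_moment_density has_integral (integral {0..a} vprof_moment_density + integral {a..} vprof_moment_density)) ({0..a} \<union> {a..})"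
    by (intro has_integral_Un integrable_integral vprof_moment_density_tail(2) assms
          integrable_continuous_interval continuous_on_vprof_moment_density)
       (auto intro: negligible_subset[of "{a}"])
  moreover have "{0..a} \<union> {a..} = {0::real..}" using assms by auto
  ultimately show ?thesis unfolding vprof_moment_def by (simp add: integral_unique)
qed

lemma vprof_moment_pos: "vprof_moment > 0"
proof -
  define c where "c = 1 + vprof 1"
  have c: "c > 0" unfolding c_def vprof_def using tanh_real_lt_1[of "1 / sqrt 2"] by simp
  have "integral {0..1} (\<lambda>s. c * s) \<le> integral {0..1} vprof_moment_density"
  proof (intro integral_le integrable_continuous_interval continuous_on_vprof_moment_density continuous_intros)
    fix s :: real assume "s \<in> {0..1}"
    then show "c * s \<le> vprof_moment_density s" unfolding vprof_moment_density_def c_def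
      by (intro mult_right_mono) (auto intro: vprof_antimono)
  qed
  moreover have "((\<lambda>s. c * s) has_integral (c * (1 ^ 2 / 2) - c * (0 ^ 2 / 2))) {0..1::real}"
    by (intro fundamental_theorem_of_calculus)
       (auto intro!: derivative_eq_intros simp flip: has_real_derivative_iff_has_vector_derivative)
  ultimately have "c / 2 \<le> integral {0..1} vprof_moment_density" by (simp add: integral_unique)
  then show ?thesis using vprof_moment_split[of 1] vprof_moment_density_tail(3)[of 1] c by simp
qed

lemma C1_eq_vprof_moment: "C1 d = (real d - 1) * sigma_d d * (2 * vprof_moment)"
proof -
  define F where "F = (\<lambda>t::real. (sgn t + vprof t) * t)"
  have F_abs: "F t = vprof_moment_density \<bar>t\<bar>" for t
    by (cases "t > 0"; cases "t = 0")
       (auto simp: F_def vprof_moment_density_def vprof_minus abs_if algebra_simps)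
  have "(\<lambda>x. vprof_moment_density (- x)) absolutely_integrable_on {..0}
        \<and> integral {..0} (\<lambda>x. vprof_moment_density (- x)) = vprof_moment"
    using vprof_moment_density_tail(1)[of 0]
    by (subst has_absolute_integral_reflect_real[where B="{0..}"]) (auto simp: vprof_moment_def)
  then have "((\<lambda>x. vprof_moment_density (- x)) has_integral vprof_moment) {..0}"
    unfolding absolutely_integrable_on_def by (metis integrable_integral)
  then have left: "(F has_integral vprof_moment) {..0}"
    by (rule has_integral_spike_eq[where S="{}", THEN iffD1, rotated 2]) (auto simp: F_abs)
  have "(vprof_moment_density has_integral vprof_moment) {0..}"
    unfolding vprof_moment_def using vprof_moment_density_tail(2)[of 0] by (simp add: integrable_integral)
  then have right: "(F has_integral vprof_moment) {0..}"
    by (rule has_integral_spike_eq[where S="{}", THEN iffD1, rotated 2]) (auto simp: F_abs)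
  have "(F has_integral (vprof_moment + vprof_moment)) ({..0} \<union> {0..})"
    by (intro has_integral_Un left right) (auto intro: negligible_subset[of "{0}"])
  moreover have "{..0} \<union> {0..} = (UNIV :: real set)" by auto
  ultimately have "integral UNIV F = 2 * vprof_moment" by (simp add: integral_unique)
  then show ?thesis unfolding C1_def F_def by simp
qed

lemma C1_pos: "d \<ge> 2 \<Longrightarrow> C1 d > 0"
  using sigma_d_pos[of d] vprof_moment_pos by (simp add: C1_eq_vprof_moment)

section \<open>Cut-off profiles\<close>

definition expansion_const :: "nat \<Rightarrow> real" where
  "expansion_const d = sigma_d d *
     (264 * real d + 2 * (2 * real d - 1) * 4 ^ (d - 1) * 2 ^ d * real d ^ d + 13824 * 2 ^ d)"

locale cutoff_profile =
  fixes u u' :: "real \<Rightarrow> real" and R :: real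
  assumes R_ge_1: "R \<ge> 1"
    and u_deriv: "\<And>x. (u has_real_derivative u' x) (at x)"
    and continuous_u': "continuous_on UNIV u'"
    and u_odd: "\<And>x. u (- x) = - u x"
    and u_inner: "\<And>x. \<bar>x\<bar> \<le> R \<Longrightarrow> u x = vprof x"
    and u_outer: "\<And>x. x \<ge> 2 * R \<Longrightarrow> u x = -1"
    and u_transition: "\<And>x. R \<le> x \<Longrightarrow> x \<le> 2 * R \<Longrightarrow> -1 \<le> u x \<and> u x \<le> vprof R"

lemma cutoff_profile_if_admissible:
  assumes adm: "admissible_vR vR" and R: "R \<ge> 1"
  shows "cutoff_profile (vR R) (deriv (vR R)) R"
proof -
  define u where "u = vR R"
  have "(\<forall>x. u (- x) = - u x) \<and> (\<forall>x. \<bar>x\<bar> < R \<longrightarrow> u x = vprof x)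
      \<and> (\<forall>x. \<bar>x\<bar> > 2 * R \<longrightarrow> u x = - sgn x) \<and> (\<forall>k x. (deriv ^^ k) u differentiable (at x))
      \<and> (\<forall>x y. R \<le> x \<longrightarrow> x \<le> y \<longrightarrow> y \<le> 2 * R \<longrightarrow> u y \<le> u x)"
    using adm R unfolding admissible_vR_def u_def by simp
  then have odd: "\<And>x. u (- x) = - u x"
    and inner: "\<And>x. \<bar>x\<bar> < R \<Longrightarrow> u x = vprof x"
    and outer: "\<And>x. \<bar>x\<bar> > 2 * R \<Longrightarrow> u x = - sgn x"
    and smooth: "\<And>k x. (deriv ^^ k) u differentiable (at x)"
    and mono: "\<And>x y. R \<le> x \<Longrightarrow> x \<le> y \<Longrightarrow> y \<le> 2 * R \<Longrightarrow> u y \<le> u x"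
    by blast+
  have deriv: "(u has_real_derivative deriv u x) (at x)" for x
    using smooth[of 0 x] by (simp add: DERIV_deriv_iff_real_differentiable)
  have cont_u: "continuous_on UNIV u"
    using deriv by (meson DERIV_isCont continuous_at_imp_continuous_on)
  have cont_u': "continuous_on UNIV (deriv u)"
    using smooth[of 1] by (simp add: continuous_at_imp_continuous_on differentiable_imp_continuous_within)
  have inner': "u x = vprof x" if "\<bar>x\<bar> \<le> R" for x
    by (rule continuous_eq_on_closure[OF cont_u continuous_on_vprof, of "ball 0 R"])
       (use inner that R in \<open>auto simp: dist_norm\<close>)
  have outer': "u x = -1" if "x \<ge> 2 * R" for x
    by (rule continuous_eq_on_closure[OF cont_u continuous_on_const, of "{2 * R<..}"])
       (use outer that R in auto)
  show ?thesis
  proof (unfold_locales, fold u_def)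
    fix x assume x: "R \<le> x" "x \<le> 2 * R"
    show "-1 \<le> u x \<and> u x \<le> vprof R"
      using mono[OF x order.refl] mono[OF order.refl x] outer'[of "2 * R"] inner'[of R] x by auto
  qed (use R deriv cont_u' odd inner' outer' in auto)
qed

context cutoff_profile
begin

lemma continuous_on_u: "continuous_on S u"
  using u_deriv by (meson DERIV_isCont continuous_at_imp_continuous_on)

lemma continuous_on_u_compose[continuous_intros]: "continuous_on S f \<Longrightarrow> continuous_on S (\<lambda>x. u (f x))"
  by (rule continuous_on_compose2[OF continuous_on_u[of UNIV]]) auto

lemma continuous_on_u'_compose[continuous_intros]: "continuous_on S f \<Longrightarrow> continuous_on S (\<lambda>x. u' (f x))"
  by (rule continuous_on_compose2[OF continuous_u']) auto

lemma one_plus_u_bounds: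
  assumes "0 \<le> s" "s \<le> 2 * R"
  shows "0 \<le> u s + 1" "u s + 1 \<le> 2 * exp (- s / 2)"
proof -
  have "0 \<le> u s + 1 \<and> u s + 1 \<le> 2 * exp (- s / 2)"
  proof (cases "s \<le> R")
    case True
    then have "u s = vprof s" using assms by (intro u_inner) auto
    moreover have "2 * exp (- s) \<le> 2 * exp (- s / 2)" using assms by simp
    ultimately show ?thesis using one_plus_vprof_le_exp[of s] vprof_ge_minus_one[of s] assms by linarith
  next
    case False
    have "1 + vprof R \<le> 2 * exp (- R)" using one_plus_vprof_le_exp[of R] R_ge_1 by simp
    also have "\<dots> \<le> 2 * exp (- s / 2)" using assms by simp
    finally show ?thesis using u_transition[of s] assms False by auto
  qed
  then show "0 \<le> u s + 1" "u s + 1 \<le> 2 * exp (- s / 2)" by auto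
qed

lemma u_transition_bounds:
  assumes "R \<le> s" "s \<le> 2 * R"
  shows "\<bar>u s + 1\<bar> \<le> 2 * exp (- R)" "\<bar>u s - vprof s\<bar> \<le> 2 * exp (- R)"
proof -
  have "1 + vprof R \<le> 2 * exp (- R)" using one_plus_vprof_le_exp[of R] R_ge_1 by simp
  moreover have "vprof s \<le> vprof R" using assms by (intro vprof_antimono)
  ultimately show "\<bar>u s + 1\<bar> \<le> 2 * exp (- R)" "\<bar>u s - vprof s\<bar> \<le> 2 * exp (- R)"
    using u_transition[OF assms] vprof_ge_minus_one[of s] by auto
qed

lemma integral_torus_box_radial:
  fixes r L :: real
  assumes rR: "R \<le> r" and fits: "r + 2 * R \<le> L / 2"
  shows "(\<lambda>x::'a::euclidean_space. u (norm x - r)) integrable_on torus_box L"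
    and "integral (torus_box L) (\<lambda>x::'a. u (norm x - r))
          = - (L ^ DIM('a)) - unit_ball_vol DIM('a) * integral {0..r + 2 * R} (\<lambda>t. u' (t - r) * t ^ DIM('a))"
proof -
  \<comment> \<open>\<open>u (norm x - r) = -1\<close> outside the ball of radius \<open>M\<close>, which lies inside the box\<close>
  define M where "M = r + 2 * R"
  have M0: "M \<ge> 0" using rR R_ge_1 by (simp add: M_def)
  have L0: "L \<ge> 0" using fits M0 by (simp add: M_def)
  define g where "g = (\<lambda>x::'a. indicator (cball 0 M) x * (u (norm x - r) - u (M - r)))"
  have "((\<lambda>t. u (t - r)) has_real_derivative u' (t - r)) (at t)" for t
  proof -
    have "((\<lambda>t. t - r) has_real_derivative 1) (at t)" by (auto intro!: derivative_eq_intros)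
    from DERIV_chain2[where g="\<lambda>t. t - r" and x=t and s=UNIV, OF u_deriv[of "t - r"] this]
    show ?thesis by simp
  qed
  note radial = integral_radial_cball[of M "\<lambda>t. u (t - r)" "\<lambda>t. u' (t - r)", OF M0 this]
  have g_int: "integrable lborel g"
    using radial(1) unfolding g_def by (simp add: continuous_intros)
  have g_val: "integral UNIV g = - unit_ball_vol DIM('a) * integral {0..M} (\<lambda>t. u' (t - r) * t ^ DIM('a))"
    using integral_lborel[OF g_int] radial(2) unfolding g_def by (simp add: continuous_intros)
  have "cball 0 M \<subseteq> (torus_box L :: 'a set)" using fits by (intro cball_subset_torus_box) (simp add: M_def)
  then have "(\<lambda>x. if x \<in> torus_box L then g x else 0) = g"
    by (intro ext) (auto simp: g_def indicator_def)
  then have g_box: "(g has_integral integral UNIV g) (torus_box L)"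
    using integrable_integral[OF integrable_on_lborel[OF g_int]]
    unfolding has_integral_restrict_UNIV[symmetric, of _ _ "torus_box L"] by simp
  have pointwise: "u (norm x - r) = -1 + g x" for x :: 'a
    using u_outer[of "norm x - r"] u_outer[of "2 * R"] by (auto simp: g_def M_def indicator_def)
  have "((\<lambda>x::'a. -1 + g x) has_integral (- measure lborel (torus_box L :: 'a set) + integral UNIV g)) (torus_box L)"
    using has_integral_add[OF has_integral_const[of "-1::real"] g_box[unfolded torus_box_def]]
    by (simp add: torus_box_def)
  then show "(\<lambda>x::'a. u (norm x - r)) integrable_on torus_box L"
    and "integral (torus_box L) (\<lambda>x::'a. u (norm x - r))
          = - (L ^ DIM('a)) - unit_ball_vol DIM('a) * integral {0..r + 2 * R} (\<lambda>t. u' (t - r) * t ^ DIM('a))"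
    using measure_torus_box[OF L0] g_val unfolding pointwise M_def by (auto dest: integral_unique)
qed

definition truncated_moment :: real where
  "truncated_moment = integral {0..2 * R} (\<lambda>s. (u s + 1) * s)"

definition near_remainder :: "nat \<Rightarrow> real \<Rightarrow> real" where
  "near_remainder n r = integral {0..min r (2 * R)}
     (\<lambda>s. (u s + 1) * ((r + s) ^ n - (r - s) ^ n - 2 * real n * r ^ (n - 1) * s))"

definition far_remainder :: "nat \<Rightarrow> real \<Rightarrow> real" where
  "far_remainder n r = integral {min r (2 * R)..2 * R}
     (\<lambda>s. (u s + 1) * ((r + s) ^ n - 2 * real n * r ^ (n - 1) * s))"

lemma integral_u'_power_by_parts:
  assumes "M \<ge> 0" "u (M - r) = -1"
  shows "integral {0..M} (\<lambda>t. u' (t - r) * t ^ Suc n)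
           = - (M ^ Suc n) - real (Suc n) * integral {0..M} (\<lambda>t. u (t - r) * t ^ n)"
proof -
  have "((\<lambda>t. u (t - r) * t ^ Suc n) has_vector_derivative
           (u' (t - r) * t ^ Suc n + real (Suc n) * (u (t - r) * t ^ n))) (at t within {0..M})" for t
  proof -
    have "((\<lambda>t. u (t - r)) has_real_derivative u' (t - r) * 1) (at t)"
      by (intro DERIV_chain2[OF u_deriv] derivative_eq_intros) auto
    then have "((\<lambda>t. u (t - r) * t ^ Suc n) has_real_derivative
                 (u' (t - r) * 1) * t ^ Suc n + u (t - r) * (real (Suc n) * t ^ n)) (at t)"
      by (intro derivative_eq_intros) auto
    then show ?thesis unfolding has_real_derivative_iff_has_vector_derivative[symmetric]
      by (auto intro: has_field_derivative_at_within simp: algebra_simps)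
  qed
  from fundamental_theorem_of_calculus[OF assms(1) this]
  have "integral {0..M} (\<lambda>t. u' (t - r) * t ^ Suc n + real (Suc n) * (u (t - r) * t ^ n)) = - (M ^ Suc n)"
    using assms(2) by (simp add: integral_unique)
  moreover have "integral {0..M} (\<lambda>t. u' (t - r) * t ^ Suc n + real (Suc n) * (u (t - r) * t ^ n))
      = integral {0..M} (\<lambda>t. u' (t - r) * t ^ Suc n) + real (Suc n) * integral {0..M} (\<lambda>t. u (t - r) * t ^ n)"
    by (subst integral_add) (auto intro!: integrable_continuous_interval continuous_intros)
  ultimately show ?thesis by simp
qed

lemma integral_u'_power_split:
  assumes r: "0 \<le> r"
  shows "- integral {0..r + 2 * R} (\<lambda>t. u' (t - r) * t ^ Suc n) - 2 * r ^ Suc n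
      = real (Suc n) * (integral {r..r + 2 * R} (\<lambda>t. (u (t - r) + 1) * t ^ n)
                        + integral {0..r} (\<lambda>t. (u (t - r) - 1) * t ^ n))"
proof -
  define M where "M = r + 2 * R"
  have rM: "r \<le> M" using R_ge_1 unfolding M_def by simp
  note int = integrable_continuous_interval
  have "integral {0..M} (\<lambda>t. u (t - r) * t ^ n)
      = integral {0..r} (\<lambda>t. u (t - r) * t ^ n) + integral {r..M} (\<lambda>t. u (t - r) * t ^ n)"
    using r rM by (intro Henstock_Kurzweil_Integration.integral_combine[symmetric] int continuous_intros) auto
  moreover have "integral {r..M} (\<lambda>t. (u (t - r) + 1) * t ^ n)
      = integral {r..M} (\<lambda>t. u (t - r) * t ^ n) + integral {r..M} (\<lambda>t. t ^ n)"
    by (simp add: distrib_right integral_add int continuous_intros)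
  moreover have "integral {0..r} (\<lambda>t. (u (t - r) - 1) * t ^ n)
      = integral {0..r} (\<lambda>t. u (t - r) * t ^ n) - integral {0..r} (\<lambda>t. t ^ n)"
    by (simp add: left_diff_distrib integral_diff int continuous_intros)
  moreover have "u (M - r) = -1" using u_outer by (simp add: M_def)
  ultimately show ?thesis
    using integral_u'_power_by_parts[of M r n] integral_power_interval[OF rM, of n]
      integral_power_interval[OF r, of n] r rM
    unfolding M_def[symmetric] by (simp add: field_simps)
qed

lemma integral_u_power_shift:
  assumes r: "0 \<le> r"
  shows "integral {r..r + 2 * R} (\<lambda>t. (u (t - r) + 1) * t ^ n) + integral {0..r} (\<lambda>t. (u (t - r) - 1) * t ^ n)
      = integral {0..2 * R} (\<lambda>s. (u s + 1) * (r + s) ^ n) - integral {0..min r (2 * R)} (\<lambda>s. (u s + 1) * (r - s) ^ n)"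
proof -
  have "integral {0..2 * R} ((\<lambda>t. (u (t - r) + 1) * t ^ n) \<circ> (+) r)
      = integral {0 + r..2 * R + r} (\<lambda>t. (u (t - r) + 1) * t ^ n)"
    by (rule integral_shift_Icc_real)
  then have outer: "integral {r..r + 2 * R} (\<lambda>t. (u (t - r) + 1) * t ^ n) = integral {0..2 * R} (\<lambda>s. (u s + 1) * (r + s) ^ n)"
    by (simp add: o_def add.commute)
  have "integral {- r..0} ((\<lambda>t. (u (t - r) - 1) * t ^ n) \<circ> (+) r)
      = integral {- r + r..0 + r} (\<lambda>t. (u (t - r) - 1) * t ^ n)"
    by (rule integral_shift_Icc_real)
  then have "integral {0..r} (\<lambda>t. (u (t - r) - 1) * t ^ n) = integral {- r..0} (\<lambda>s. (u s - 1) * (r + s) ^ n)"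
    by (simp add: o_def add.commute)
  also have "\<dots> = integral {0..r} (\<lambda>s. (u (- s) - 1) * (r + - s) ^ n)"
    using Henstock_Kurzweil_Integration.integral_reflect_real[of 0 "-r" "\<lambda>s. (u s - 1) * (r + s) ^ n"] by simp
  also have "\<dots> = integral {0..r} (\<lambda>s. - ((u s + 1) * (r - s) ^ n))"
    by (intro integral_cong) (simp add: u_odd algebra_simps)
  also have "\<dots> = - integral {0..r} (\<lambda>s. (u s + 1) * (r - s) ^ n)"
    by simp
  \<comment> \<open>the integrand vanishes on \<open>[2 R, r]\<close>\<close>
  also have "integral {0..r} (\<lambda>s. (u s + 1) * (r - s) ^ n) = integral {0..min r (2 * R)} (\<lambda>s. (u s + 1) * (r - s) ^ n)"
  proof (cases "r \<le> 2 * R")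
    case False
    then have "integral {0..r} (\<lambda>s. (u s + 1) * (r - s) ^ n)
        = integral {0..2 * R} (\<lambda>s. (u s + 1) * (r - s) ^ n) + integral {2 * R..r} (\<lambda>s. (u s + 1) * (r - s) ^ n)"
      using R_ge_1 by (intro Henstock_Kurzweil_Integration.integral_combine[symmetric]
          integrable_continuous_interval continuous_intros) auto
    also have "integral {2 * R..r} (\<lambda>s. (u s + 1) * (r - s) ^ n) = 0"
      by (subst integral_cong[where g="\<lambda>_. 0"]) (auto simp: u_outer)
    finally show ?thesis using False by simp
  qed simp
  finally show ?thesis using outer by simp
qed

lemma moment_remainder_decomposition:
  assumes r: "0 \<le> r"
  shows "integral {0..2 * R} (\<lambda>s. (u s + 1) * (r + s) ^ n) - integral {0..min r (2 * R)} (\<lambda>s. (u s + 1) * (r - s) ^ n)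
      = 2 * real n * r ^ (n - 1) * truncated_moment + near_remainder n r + far_remainder n r"
proof -
  define c where "c = min r (2 * R)"
  have c: "0 \<le> c" "c \<le> 2 * R" using r R_ge_1 by (auto simp: c_def)
  note int = integrable_continuous_interval
  have split: "integral {0..2 * R} g = integral {0..c} g + integral {c..2 * R} g" if "continuous_on UNIV g" for g :: "real \<Rightarrow> real"
    using c by (intro Henstock_Kurzweil_Integration.integral_combine[symmetric] int continuous_on_subset[OF that]) auto
  have linear: "integral {a..b} (\<lambda>s. f s - k * g s) = integral {a..b} f - k * integral {a..b} g"
    if "continuous_on UNIV f" "continuous_on UNIV g" for a b k and f g :: "real \<Rightarrow> real"
  proof -
    have "continuous_on {a..b} f" "continuous_on {a..b} g" using that by (auto intro: continuous_on_subset)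
    then have "integral {a..b} (\<lambda>s. f s - k * g s) = integral {a..b} f - integral {a..b} (\<lambda>s. k * g s)"
      by (intro integral_diff int continuous_intros)
    then show ?thesis by simp
  qed
  have near: "near_remainder n r = integral {0..c} (\<lambda>s. (u s + 1) * (r + s) ^ n)
      - integral {0..c} (\<lambda>s. (u s + 1) * (r - s) ^ n) - 2 * real n * r ^ (n - 1) * integral {0..c} (\<lambda>s. (u s + 1) * s)"
  proof -
    have "near_remainder n r = integral {0..c} (\<lambda>s. ((u s + 1) * (r + s) ^ n - (u s + 1) * (r - s) ^ n)
        - 2 * real n * r ^ (n - 1) * ((u s + 1) * s))"
      unfolding near_remainder_def c_def by (intro integral_cong) (simp add: algebra_simps)
    then show ?thesis
      by (simp add: linear integral_diff int continuous_intros)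
  qed
  have far: "far_remainder n r = integral {c..2 * R} (\<lambda>s. (u s + 1) * (r + s) ^ n)
      - 2 * real n * r ^ (n - 1) * integral {c..2 * R} (\<lambda>s. (u s + 1) * s)"
  proof -
    have "far_remainder n r = integral {c..2 * R} (\<lambda>s. (u s + 1) * (r + s) ^ n - 2 * real n * r ^ (n - 1) * ((u s + 1) * s))"
      unfolding far_remainder_def c_def by (intro integral_cong) (simp add: algebra_simps)
    then show ?thesis by (simp add: linear continuous_intros)
  qed
  have cont: "continuous_on UNIV (\<lambda>s. (u s + 1) * (r + s) ^ n)" "continuous_on UNIV (\<lambda>s. (u s + 1) * s)"
    by (intro continuous_intros)+
  show ?thesis
    unfolding truncated_moment_def near far c_def[symmetric] split[OF cont(1)] split[OF cont(2)]
    by (simp add: algebra_simps)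
qed

lemma radial_moment_identity:
  assumes "0 \<le> r"
  shows "- integral {0..r + 2 * R} (\<lambda>t. u' (t - r) * t ^ Suc n) - 2 * r ^ Suc n
      = real (Suc n) * (2 * real n * r ^ (n - 1) * truncated_moment + near_remainder n r + far_remainder n r)"
  using integral_u'_power_split[OF assms] integral_u_power_shift[OF assms] moment_remainder_decomposition[OF assms]
  by simp

lemma near_remainder_bound:
  assumes r: "0 \<le> r"
  shows "\<bar>near_remainder n r\<bar> \<le> (if n \<le> 2 then 0 else 2 ^ (n + 1) * 13824 * r ^ (n - 3))"
proof -
  define c where "c = min r (2 * R)"
  have c: "0 \<le> c" "c \<le> r" "c \<le> 2 * R" using r R_ge_1 by (auto simp: c_def)
  define B where "B = (\<lambda>s::real. if n \<le> 2 then 0 else 2 ^ (n + 1) * s ^ 3 * r ^ (n - 3))"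
  have "norm (near_remainder n r) \<le> integral {0..c} (\<lambda>s. 2 * exp (- s / 2) * B s)"
    unfolding near_remainder_def c_def[symmetric]
  proof (rule integral_norm_bound_integral)
    show "(\<lambda>s. (u s + 1) * ((r + s) ^ n - (r - s) ^ n - 2 * real n * r ^ (n - 1) * s)) integrable_on {0..c}"
      by (intro integrable_continuous_interval continuous_intros)
    show "(\<lambda>s. 2 * exp (- s / 2) * B s) integrable_on {0..c}"
      unfolding B_def by (cases "n \<le> 2") (auto intro!: integrable_continuous_interval continuous_intros)
    fix s assume s: "s \<in> {0..c}"
    have "\<bar>(r + s) ^ n - (r - s) ^ n - 2 * real n * r ^ (n - 1) * s\<bar> \<le> B s"
      using binomial_odd_remainder_bound[of s r n] s c unfolding B_def by auto
    moreover have "\<bar>u s + 1\<bar> \<le> 2 * exp (- s / 2)" using one_plus_u_bounds[of s] s c by auto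
    ultimately show "norm ((u s + 1) * ((r + s) ^ n - (r - s) ^ n - 2 * real n * r ^ (n - 1) * s))
        \<le> 2 * exp (- s / 2) * B s"
      unfolding real_norm_def abs_mult by (intro mult_mono) auto
  qed
  also have "\<dots> \<le> (if n \<le> 2 then 0 else 2 ^ (n + 1) * 13824 * r ^ (n - 3))"
  proof (cases "n \<le> 2")
    case False
    have "integral {0..c} (\<lambda>s. 2 * exp (- s / 2) * B s)
        = integral {0..c} (\<lambda>s. (2 ^ (n + 1) * r ^ (n - 3)) * (2 * exp (- s / 2) * s ^ 3))"
      by (intro integral_cong) (simp add: B_def False mult_ac)
    also have "\<dots> = 2 ^ (n + 1) * r ^ (n - 3) * integral {0..c} (\<lambda>s. 2 * exp (- s / 2) * s ^ 3)"
      by (rule integral_mult_right)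
    also have "\<dots> \<le> 2 ^ (n + 1) * r ^ (n - 3) * 13824"
      using integral_exp_cube_le[OF c(1)] r by (intro mult_left_mono) auto
    finally show ?thesis using False by (simp add: mult_ac)
  qed (simp add: B_def)
  finally show ?thesis by simp
qed

lemma far_remainder_bound:
  assumes n: "n \<ge> 1" and rR: "R \<le> r"
  shows "\<bar>far_remainder n r\<bar> \<le> 2 * (1 + 2 * real n) * 4 ^ n * 2 ^ Suc n * real (Suc n) ^ Suc n * exp (- R / 2)"
proof (cases "2 * R \<le> r")
  case True
  then show ?thesis by (simp add: far_remainder_def)
next
  case False
  have R0: "R > 0" using R_ge_1 by simp
  define K where "K = 2 * exp (- R) * ((1 + 2 * real n) * (4 * R) ^ n)"
  have "norm (far_remainder n r) \<le> integral {r..2 * R} (\<lambda>s. K)"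
    unfolding far_remainder_def using False
  proof (simp only: min_absorb1, intro integral_norm_bound_integral)
    show "(\<lambda>s. (u s + 1) * ((r + s) ^ n - 2 * real n * r ^ (n - 1) * s)) integrable_on {r..2 * R}"
      by (intro integrable_continuous_interval continuous_intros)
    fix s assume s: "s \<in> {r..2 * R}"
    have "\<bar>u s + 1\<bar> \<le> 2 * exp (- R)" using u_transition_bounds(1)[of s] s rR by auto
    moreover have "\<bar>(r + s) ^ n - 2 * real n * r ^ (n - 1) * s\<bar> \<le> (1 + 2 * real n) * (4 * R) ^ n"
      using power_sum_minus_linear_bound[OF n, of r s "4 * R"] s rR R0 False by auto
    ultimately show "norm ((u s + 1) * ((r + s) ^ n - 2 * real n * r ^ (n - 1) * s)) \<le> K"
      unfolding real_norm_def abs_mult K_def by (intro mult_mono) auto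
  qed auto
  also have "integral {r..2 * R} (\<lambda>s. K) \<le> R * K"
    using False rR R0 unfolding K_def by (simp add: mult_right_mono)
  also have "R * K = 2 * (1 + 2 * real n) * 4 ^ n * (R ^ Suc n * exp (- R))"
    unfolding K_def by (simp add: power_mult_distrib mult_ac)
  also have "R ^ Suc n * exp (- R) \<le> 2 ^ Suc n * real (Suc n) ^ Suc n * exp (R / 2) * exp (- R)"
    using power_le_exp_half[of R "Suc n"] R0 by (intro mult_right_mono) auto
  also have "\<dots> = 2 ^ Suc n * real (Suc n) ^ Suc n * exp (- R / 2)"
    by (simp add: mult.assoc flip: exp_add)
  finally show ?thesis by (simp add: mult_ac)
qed

lemma truncated_moment_approx: "\<bar>truncated_moment - vprof_moment\<bar> \<le> 132 * exp (- R / 2)"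
proof -
  have R0: "R > 0" using R_ge_1 by simp
  have "truncated_moment - vprof_moment
      = integral {0..2 * R} (\<lambda>s. (u s - vprof s) * s) - integral {2 * R..} vprof_moment_density"
  proof -
    have "truncated_moment - integral {0..2 * R} vprof_moment_density
        = integral {0..2 * R} (\<lambda>s. (u s + 1) * s - vprof_moment_density s)"
      unfolding truncated_moment_def
      by (intro integral_diff[symmetric] integrable_continuous_interval continuous_intros
            continuous_on_vprof_moment_density)
    also have "\<dots> = integral {0..2 * R} (\<lambda>s. (u s - vprof s) * s)"
      by (intro integral_cong) (simp add: vprof_moment_density_def algebra_simps)
    finally show ?thesis using vprof_moment_split[of "2 * R"] R0 by simp
  qed
  \<comment> \<open>\<open>u\<close> and \<open>vprof\<close> differ only on \<open>[R, 2 R]\<close>, where both are exponentially close to \<open>-1\<close>\<close>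
  moreover have "norm (integral {0..2 * R} (\<lambda>s. (u s - vprof s) * s)) \<le> 128 * exp (- R / 2)"
  proof -
    have "norm (integral {0..2 * R} (\<lambda>s. (u s - vprof s) * s)) \<le> integral {0..2 * R} (\<lambda>s. 4 * R * exp (- R))"
    proof (rule integral_norm_bound_integral)
      show "(\<lambda>s. (u s - vprof s) * s) integrable_on {0..2 * R}"
        by (intro integrable_continuous_interval continuous_intros continuous_on_vprof)
      fix s assume s: "s \<in> {0..2 * R}"
      show "norm ((u s - vprof s) * s) \<le> 4 * R * exp (- R)"
      proof (cases "s \<le> R")
        case True then show ?thesis using u_inner[of s] s by auto
      next
        case False
        then have "\<bar>u s - vprof s\<bar> * \<bar>s\<bar> \<le> 2 * exp (- R) * (2 * R)"
          using u_transition_bounds(2)[of s] s by (intro mult_mono) auto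
        then show ?thesis by (simp add: abs_mult mult_ac)
      qed
    qed auto
    also have "\<dots> = 8 * (R ^ 2 * exp (- R))"
      using R0 by (simp add: power2_eq_square)
    also have "R ^ 2 * exp (- R) \<le> 2 ^ 2 * real 2 ^ 2 * exp (R / 2) * exp (- R)"
      using power_le_exp_half[of R 2] R0 by (intro mult_right_mono) auto
    also have "\<dots> = 16 * exp (- R / 2)" by (simp add: mult.assoc flip: exp_add)
    finally show ?thesis by simp
  qed
  moreover have "0 \<le> integral {2 * R..} vprof_moment_density"
    using vprof_moment_density_tail(3)[of "2 * R"] R0 by simp
  moreover have "exp (- R) \<le> exp (- R / 2)" using R0 by simp
  ultimately show ?thesis using vprof_moment_tail_le[of R] R0 unfolding abs_le_iff real_norm_def by linarith
qed

lemma integral_torus_box_moments: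
  fixes r L :: real
  assumes d: "DIM('a::euclidean_space) = Suc n" and rR: "R \<le> r" and fits: "r + 2 * R \<le> L / 2"
  shows "integral (torus_box L :: 'a set) (\<lambda>x. u (norm x - r))
     = - (L ^ Suc n) + 2 * unit_ball_vol (Suc n) * r ^ Suc n
       + sigma_d (Suc n) * (2 * real n * r ^ (n - 1) * truncated_moment + near_remainder n r + far_remainder n r)"
proof -
  define \<omega> where "\<omega> = unit_ball_vol (Suc n)"
  have "0 \<le> r" using rR R_ge_1 by simp
  have "integral (torus_box L :: 'a set) (\<lambda>x. u (norm x - r))
      = - (L ^ Suc n) + 2 * \<omega> * r ^ Suc n
        + \<omega> * (- integral {0..r + 2 * R} (\<lambda>t. u' (t - r) * t ^ Suc n) - 2 * r ^ Suc n)"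
    using integral_torus_box_radial(2)[OF rR fits, where 'a='a] unfolding d \<omega>_def by (simp add: algebra_simps)
  also have "\<dots> = - (L ^ Suc n) + 2 * \<omega> * r ^ Suc n + \<omega> * real (Suc n)
      * (2 * real n * r ^ (n - 1) * truncated_moment + near_remainder n r + far_remainder n r)"
    unfolding radial_moment_identity[OF \<open>0 \<le> r\<close>] by simp
  also have "\<omega> * real (Suc n) = sigma_d (Suc n)"
    using unit_ball_vol_mult_dim[of "Suc n"] by (simp add: \<omega>_def)
  finally show ?thesis unfolding \<omega>_def .
qed

lemma leading_error_bound:
  assumes n: "n \<ge> 1" and rR: "R \<le> r"
  shows "\<bar>2 * real n * sigma_d (Suc n) * (truncated_moment - vprof_moment)
            + sigma_d (Suc n) * far_remainder n r / r ^ (n - 1)\<bar>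
         \<le> expansion_const (Suc n) * exp (- R / 2)"
proof -
  define \<sigma> where "\<sigma> = sigma_d (Suc n)"
  define Kt where "Kt = 2 * (1 + 2 * real n) * 4 ^ n * 2 ^ Suc n * real (Suc n) ^ Suc n"
  have \<sigma>: "\<sigma> > 0" using sigma_d_pos[of "Suc n"] by (simp add: \<sigma>_def)
  have r: "r ^ (n - 1) \<ge> 1" using rR R_ge_1 by (auto intro: one_le_power)
  have "0 \<le> \<sigma> * \<bar>far_remainder n r\<bar>" using \<sigma> by simp
  then have "\<sigma> * \<bar>far_remainder n r\<bar> / r ^ (n - 1) \<le> \<sigma> * \<bar>far_remainder n r\<bar>"
    using r by (simp add: divide_le_eq mult_le_cancel_left1)
  then have "\<bar>2 * real n * \<sigma> * (truncated_moment - vprof_moment) + \<sigma> * far_remainder n r / r ^ (n - 1)\<bar>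
      \<le> 2 * real n * \<sigma> * \<bar>truncated_moment - vprof_moment\<bar> + \<sigma> * \<bar>far_remainder n r\<bar>"
    using \<sigma> r abs_triangle_ineq[of "2 * real n * \<sigma> * (truncated_moment - vprof_moment)"
        "\<sigma> * far_remainder n r / r ^ (n - 1)"]
    by (simp add: abs_mult)
  also have "\<dots> \<le> 2 * real n * \<sigma> * (132 * exp (- R / 2)) + \<sigma> * (Kt * exp (- R / 2))"
    using truncated_moment_approx far_remainder_bound[OF n rR] \<sigma> unfolding Kt_def
    by (intro add_mono mult_left_mono) auto
  also have "\<dots> = \<sigma> * (264 * real n + Kt) * exp (- R / 2)" by (simp add: algebra_simps)
  also have "\<dots> \<le> \<sigma> * (264 * real (Suc n) + Kt + 13824 * 2 ^ Suc n) * exp (- R / 2)"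
    using \<sigma> by (intro mult_right_mono mult_left_mono) auto
  also have "\<dots> = expansion_const (Suc n) * exp (- R / 2)"
    unfolding expansion_const_def Kt_def \<sigma>_def by simp
  finally show ?thesis unfolding \<sigma>_def .
qed

lemma near_error_bound:
  assumes r: "0 \<le> r"
  shows "\<bar>sigma_d (Suc n) * near_remainder n r\<bar> \<le> (if n \<le> 2 then 0 else expansion_const (Suc n) * r ^ (n - 3))"
proof -
  have \<sigma>: "sigma_d (Suc n) > 0" using sigma_d_pos[of "Suc n"] by simp
  have "\<bar>sigma_d (Suc n) * near_remainder n r\<bar> \<le> sigma_d (Suc n) * (if n \<le> 2 then 0 else 2 ^ (n + 1) * 13824 * r ^ (n - 3))"
    unfolding abs_mult using near_remainder_bound[OF r, of n] \<sigma> by (simp add: mult_left_mono)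
  also have "\<dots> \<le> (if n \<le> 2 then 0 else expansion_const (Suc n) * r ^ (n - 3))"
  proof (cases "n \<le> 2")
    case False
    have "sigma_d (Suc n) * (13824 * 2 ^ Suc n) \<le> expansion_const (Suc n)"
      unfolding expansion_const_def using \<sigma> by (intro mult_left_mono) auto
    then have "sigma_d (Suc n) * (13824 * 2 ^ Suc n) * r ^ (n - 3) \<le> expansion_const (Suc n) * r ^ (n - 3)"
      using r by (intro mult_right_mono) auto
    then show ?thesis using False by (simp add: mult_ac)
  qed simp
  finally show ?thesis .
qed

lemma integral_torus_box_expansion:
  fixes r L :: real
  assumes dim: "DIM('a::euclidean_space) \<ge> 2" and rR: "R \<le> r" and fits: "r + 2 * R \<le> L / 2"
  obtains E1 \<epsilon> where
    "integral (torus_box L :: 'a set) (\<lambda>x. u (norm x - r))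
       = - (L ^ DIM('a)) + 2 * unit_ball_vol DIM('a) * r ^ DIM('a) + r ^ (DIM('a) - 2) * (C1 DIM('a) + E1) + \<epsilon>"
    "\<bar>E1\<bar> \<le> expansion_const DIM('a) * exp (- R / 2)"
    "\<bar>\<epsilon>\<bar> \<le> (if DIM('a) \<le> 3 then 0 else expansion_const DIM('a) * r ^ (DIM('a) - 4))"
proof -
  \<comment> \<open>the linear part of the kernel gives \<open>C1\<close>, up to the truncation of the moment integral\<close>
  define n where "n = DIM('a) - 1"
  have d: "DIM('a) = Suc n" and n: "n \<ge> 1" using dim by (auto simp: n_def)
  define E1 where "E1 = 2 * real n * sigma_d (Suc n) * (truncated_moment - vprof_moment)
                        + sigma_d (Suc n) * far_remainder n r / r ^ (n - 1)"
  have "r ^ (n - 1) \<noteq> 0" using rR R_ge_1 by simp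
  then have "integral (torus_box L :: 'a set) (\<lambda>x. u (norm x - r))
      = - (L ^ Suc n) + 2 * unit_ball_vol (Suc n) * r ^ Suc n + r ^ (n - 1) * (C1 (Suc n) + E1)
        + sigma_d (Suc n) * near_remainder n r"
    unfolding integral_torus_box_moments[OF d rR fits] E1_def C1_eq_vprof_moment by (simp add: field_simps)
  then show thesis
    using that[of E1 "sigma_d (Suc n) * near_remainder n r"] leading_error_bound[OF n rR, folded E1_def]
      near_error_bound[of r n] rR R_ge_1
    unfolding d by (auto split: if_splits)
qed

end

section \<open>The mass of the trial function\<close>

definition phi_max :: "nat \<Rightarrow> real" where
  "phi_max d = 2 * sigma_d d / (real d * 6 ^ d)"

lemma phi_max_pos: "d > 0 \<Longrightarrow> phi_max d > 0"
  using sigma_d_pos[of d] by (simp add: phi_max_def)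

lemma r_eta_power:
  assumes d: "d > 0" and "\<phi> \<ge> 0" "\<eta> \<ge> 0"
  shows "2 * unit_ball_vol (real d) * r_eta d L \<phi> \<eta> ^ d = \<phi> * \<eta> * L ^ d"
proof -
  define X where "X = \<phi> * real d / (2 * sigma_d d)"
  have X: "X \<ge> 0" using assms sigma_d_pos[OF d] by (simp add: X_def)
  have "r_eta d L \<phi> \<eta> ^ d = (\<eta> powr (1 / real d)) ^ d * (X powr (1 / real d)) ^ d * L ^ d"
    by (simp add: r_eta_def X_def power_mult_distrib)
  also have "\<dots> = \<eta> * X * L ^ d" using assms X by (simp add: powr_inverse_power)
  also have "X = \<phi> / (2 * unit_ball_vol (real d))"
    using d unfolding X_def unit_ball_vol_mult_dim[OF d, symmetric] by simp
  finally have "r_eta d L \<phi> \<eta> ^ d = \<eta> * (\<phi> / (2 * unit_ball_vol (real d))) * L ^ d" .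
  moreover have "unit_ball_vol (real d) > 0" by simp
  ultimately show ?thesis by (simp add: field_simps)
qed

lemma r_eta_one_le_sixth:
  assumes d: "d > 0" and "0 < \<phi>" "\<phi> \<le> phi_max d" "L \<ge> 0"
  shows "r_eta d L \<phi> 1 \<le> L / 6"
proof -
  have \<sigma>: "sigma_d d > 0" using sigma_d_pos[OF d] .
  have "\<phi> * real d / (2 * sigma_d d) \<le> 2 * sigma_d d / (real d * 6 ^ d) * real d / (2 * sigma_d d)"
    using assms \<sigma> unfolding phi_max_def by (intro divide_right_mono mult_right_mono) auto
  also have "\<dots> = (1 / 6) ^ d" using \<sigma> d by (simp add: field_simps power_divide)
  moreover have "0 \<le> \<phi> * real d / (2 * sigma_d d)" using assms \<sigma> by simp
  ultimately have "r_eta d L \<phi> 1 \<le> ((1 / 6) ^ d) powr (1 / real d) * L"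
    unfolding r_eta_def using assms by (simp add: mult_right_mono powr_mono2)
  also have "((1 / 6) ^ d) powr (1 / real d) = (1 / 6 :: real)"
    using d by (simp add: powr_realpow[symmetric] powr_powr)
  finally show ?thesis by simp
qed

lemma solve_mass_constraint:
  fixes \<Lambda> c \<rho> E \<epsilon> \<alpha> I \<phi> \<eta> :: real
  assumes \<Lambda>: "\<Lambda> \<noteq> 0" and c: "c \<noteq> 0"
    and I: "I = \<Lambda> * (-1 + \<phi> * \<eta>) + \<rho> * (c + E) + \<epsilon>"
    and mass: "1 / \<Lambda> * (I + \<alpha> * \<Lambda>) = -1 + \<phi>"
  shows "\<alpha> = \<phi> * (1 - \<eta>) - c / \<Lambda> * \<rho> * (1 + E / c) - \<epsilon> / \<Lambda>"
proof -
  have "I + \<alpha> * \<Lambda> = \<Lambda> * (-1 + \<phi>)" using mass \<Lambda> by (simp add: field_simps)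
  then have "\<alpha> * \<Lambda> = \<Lambda> * (\<phi> * (1 - \<eta>)) - \<rho> * (c + E) - \<epsilon>" using I by (simp add: algebra_simps)
  then have "\<alpha> = (\<Lambda> * (\<phi> * (1 - \<eta>)) - \<rho> * (c + E) - \<epsilon>) / \<Lambda>" using \<Lambda> by (simp add: eq_divide_eq)
  also have "\<dots> = \<phi> * (1 - \<eta>) - \<rho> * (c + E) / \<Lambda> - \<epsilon> / \<Lambda>" using \<Lambda> by (simp add: diff_divide_distrib)
  also have "\<rho> * (c + E) / \<Lambda> = c / \<Lambda> * \<rho> * (1 + E / c)" using c \<Lambda> by (simp add: field_simps)
  finally show ?thesis .
qed

definition error_const :: "nat \<Rightarrow> real" where
  "error_const d = max 2 (max (expansion_const d) (expansion_const d / C1 d))"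

lemma exp_half_le_error_const:
  assumes "R \<ge> 0"
  shows "expansion_const d * exp (- R / 2) \<le> error_const d * exp (- R / error_const d)"
    and "expansion_const d / C1 d * exp (- R / 2) \<le> error_const d * exp (- R / error_const d)"
proof -
  have C: "error_const d \<ge> 2" "expansion_const d \<le> error_const d" "expansion_const d / C1 d \<le> error_const d"
    by (auto simp: error_const_def)
  then have "R / error_const d \<le> R / 2" using assms by (intro divide_left_mono) auto
  then have e: "exp (- R / 2) \<le> exp (- R / error_const d)" by simp
  show "expansion_const d * exp (- R / 2) \<le> error_const d * exp (- R / error_const d)"
    and "expansion_const d / C1 d * exp (- R / 2) \<le> error_const d * exp (- R / error_const d)"
    using mult_mono[OF C(2) e] mult_mono[OF C(3) e] C by auto
qed

context
  fixes vR :: "real \<Rightarrow> real \<Rightarrow> real" and L \<phi> R \<eta> :: real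
  assumes dim: "DIM('a::euclidean_space) \<ge> 2" and vR: "admissible_vR vR"
    and L: "L \<ge> 1" and \<phi>: "0 < \<phi>" "\<phi> \<le> phi_max DIM('a)" and R: "R \<ge> 1" and \<eta>: "0 \<le> \<eta>"
    and r: "R \<le> r_eta DIM('a) L \<phi> \<eta>" "r_eta DIM('a) L \<phi> \<eta> \<le> r_eta DIM('a) L \<phi> 1"
begin

lemma integral_cutoff_profile_expansion:
  obtains E1 \<epsilon> where
    "(\<lambda>x::'a. vR R (norm x - r_eta DIM('a) L \<phi> \<eta>)) integrable_on torus_box L"
    "integral (torus_box L :: 'a set) (\<lambda>x. vR R (norm x - r_eta DIM('a) L \<phi> \<eta>))
       = L ^ DIM('a) * (-1 + \<phi> * \<eta>) + r_eta DIM('a) L \<phi> \<eta> powr (real DIM('a) - 2) * (C1 DIM('a) + E1) + \<epsilon>"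
    "\<bar>E1\<bar> \<le> expansion_const DIM('a) * exp (- R / 2)"
    "\<bar>\<epsilon>\<bar> \<le> (if DIM('a) \<le> 3 then 0 else expansion_const DIM('a) * r_eta DIM('a) L \<phi> \<eta> powr (real DIM('a) - 4))"
proof -
  define d where "d = DIM('a)"
  define r where "r = r_eta d L \<phi> \<eta>"
  have d: "d \<ge> 2" and \<phi>_le: "\<phi> \<le> phi_max d" using dim \<phi> unfolding d_def by auto
  have rR: "R \<le> r" and r_le: "r \<le> r_eta d L \<phi> 1" using r unfolding r_def d_def by auto
  have r0: "r > 0" using rR R by simp
  have fits: "r + 2 * R \<le> L / 2"
    using r_le r_eta_one_le_sixth[of d \<phi> L] d \<phi>(1) \<phi>_le L rR by auto
  interpret cutoff_profile "vR R" "deriv (vR R)" R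
    using cutoff_profile_if_admissible[OF vR R] .
  obtain E1 \<epsilon> where
    I: "integral (torus_box L :: 'a set) (\<lambda>x. vR R (norm x - r))
       = - (L ^ d) + 2 * unit_ball_vol d * r ^ d + r ^ (d - 2) * (C1 d + E1) + \<epsilon>"
    and E1: "\<bar>E1\<bar> \<le> expansion_const d * exp (- R / 2)"
    and \<epsilon>: "\<bar>\<epsilon>\<bar> \<le> (if d \<le> 3 then 0 else expansion_const d * r ^ (d - 4))"
    by (rule integral_torus_box_expansion[OF dim rR fits, folded d_def])
  have vol: "2 * unit_ball_vol d * r ^ d = \<phi> * \<eta> * L ^ d"
    using r_eta_power[of d \<phi> \<eta> L] d \<phi> \<eta> unfolding r_def by simp
  have pow: "r powr (real d - 2) = r ^ (d - 2)" "\<not> d \<le> 3 \<Longrightarrow> r powr (real d - 4) = r ^ (d - 4)"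
    using powr_of_nat_diff[of r 2 d] powr_of_nat_diff[of r 4 d] d r0 by auto
  have "integral (torus_box L :: 'a set) (\<lambda>x. vR R (norm x - r))
      = L ^ d * (-1 + \<phi> * \<eta>) + r powr (real d - 2) * (C1 d + E1) + \<epsilon>"
  proof -
    have "L ^ d * (-1 + \<phi> * \<eta>) = - (L ^ d) + 2 * unit_ball_vol d * r ^ d"
      using vol by (simp add: algebra_simps)
    then show ?thesis unfolding I pow(1) by simp
  qed
  moreover have "\<bar>\<epsilon>\<bar> \<le> (if d \<le> 3 then 0 else expansion_const d * r powr (real d - 4))"
    using \<epsilon> pow(2) by auto
  moreover note integral_torus_box_radial(1)[OF rR fits]
  ultimately show thesis
    using that[of E1 \<epsilon>, folded d_def, folded r_def] E1 by blast
qed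

lemma integral_cutoff_profile_error:
  "\<exists>E1 \<epsilon>. integral (torus_box L :: 'a set) (\<lambda>x. vR R (norm x - r_eta DIM('a) L \<phi> \<eta>))
       = L ^ DIM('a) * (-1 + \<phi> * \<eta>) + r_eta DIM('a) L \<phi> \<eta> powr (real DIM('a) - 2) * (C1 DIM('a) + E1) + \<epsilon>
     \<and> \<bar>E1\<bar> \<le> error_const DIM('a) * exp (- R / error_const DIM('a))
     \<and> (if DIM('a) \<le> 3 then \<bar>\<epsilon>\<bar> \<le> error_const DIM('a) * exp (- R / error_const DIM('a))
        else \<bar>\<epsilon>\<bar> \<le> error_const DIM('a) * r_eta DIM('a) L \<phi> \<eta> powr (real DIM('a) - 4))"
proof -
  obtain E1 \<epsilon> where I: "integral (torus_box L :: 'a set) (\<lambda>x. vR R (norm x - r_eta DIM('a) L \<phi> \<eta>))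
       = L ^ DIM('a) * (-1 + \<phi> * \<eta>) + r_eta DIM('a) L \<phi> \<eta> powr (real DIM('a) - 2) * (C1 DIM('a) + E1) + \<epsilon>"
    and E1: "\<bar>E1\<bar> \<le> expansion_const DIM('a) * exp (- R / 2)"
    and \<epsilon>: "\<bar>\<epsilon>\<bar> \<le> (if DIM('a) \<le> 3 then 0 else expansion_const DIM('a) * r_eta DIM('a) L \<phi> \<eta> powr (real DIM('a) - 4))"
    by (rule integral_cutoff_profile_expansion)
  have K: "expansion_const DIM('a) \<le> error_const DIM('a)" "error_const DIM('a) \<ge> 0"
    by (auto simp: error_const_def)
  have "\<bar>E1\<bar> \<le> error_const DIM('a) * exp (- R / error_const DIM('a))"
    using E1 exp_half_le_error_const(1)[of R "DIM('a)"] R by linarith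
  moreover have "expansion_const DIM('a) * r_eta DIM('a) L \<phi> \<eta> powr (real DIM('a) - 4)
      \<le> error_const DIM('a) * r_eta DIM('a) L \<phi> \<eta> powr (real DIM('a) - 4)"
    using K by (intro mult_right_mono) auto
  ultimately show ?thesis
    using I \<epsilon> K by (intro exI[of _ E1] exI[of _ \<epsilon>]) (auto split: if_splits)
qed

lemma mass_constant_expansion:
  assumes "1 / L ^ DIM('a) * integral (torus_box L :: 'a set) (\<lambda>x. vR R (norm x - r_eta DIM('a) L \<phi> \<eta>) + \<alpha>) = -1 + \<phi>"
  shows "\<exists>E2 E3. \<alpha> = \<phi> * (1 - \<eta>) - C1 DIM('a) / L ^ DIM('a) * r_eta DIM('a) L \<phi> \<eta> powr (real DIM('a) - 2) * (1 + E2)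
                       - E3 / L ^ DIM('a)
      \<and> \<bar>E2\<bar> \<le> error_const DIM('a) * exp (- R / error_const DIM('a))
      \<and> \<bar>E3\<bar> \<le> error_const DIM('a) * r_eta DIM('a) L \<phi> \<eta> powr (real DIM('a) - 4)"
proof -
  obtain E1 \<epsilon> where int: "(\<lambda>x::'a. vR R (norm x - r_eta DIM('a) L \<phi> \<eta>)) integrable_on torus_box L"
    and I: "integral (torus_box L :: 'a set) (\<lambda>x. vR R (norm x - r_eta DIM('a) L \<phi> \<eta>))
       = L ^ DIM('a) * (-1 + \<phi> * \<eta>) + r_eta DIM('a) L \<phi> \<eta> powr (real DIM('a) - 2) * (C1 DIM('a) + E1) + \<epsilon>"
    and E1: "\<bar>E1\<bar> \<le> expansion_const DIM('a) * exp (- R / 2)"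
    and \<epsilon>: "\<bar>\<epsilon>\<bar> \<le> (if DIM('a) \<le> 3 then 0 else expansion_const DIM('a) * r_eta DIM('a) L \<phi> \<eta> powr (real DIM('a) - 4))"
    by (rule integral_cutoff_profile_expansion)
  have C1: "C1 DIM('a) > 0" using C1_pos[OF dim] .
  have "L ^ DIM('a) \<noteq> 0" using L by simp
  moreover have "C1 DIM('a) \<noteq> 0" using C1 by simp
  moreover have "1 / L ^ DIM('a) * (integral (torus_box L :: 'a set) (\<lambda>x. vR R (norm x - r_eta DIM('a) L \<phi> \<eta>))
      + \<alpha> * L ^ DIM('a)) = -1 + \<phi>"
    using assms integral_torus_box_add_const[OF int] L by simp
  ultimately have \<alpha>: "\<alpha> = \<phi> * (1 - \<eta>) - C1 DIM('a) / L ^ DIM('a) * r_eta DIM('a) L \<phi> \<eta> powr (real DIM('a) - 2) * (1 + E1 / C1 DIM('a))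
                       - \<epsilon> / L ^ DIM('a)"
    by (rule solve_mass_constraint[OF _ _ I])
  have "\<bar>E1 / C1 DIM('a)\<bar> \<le> expansion_const DIM('a) / C1 DIM('a) * exp (- R / 2)"
    using divide_right_mono[OF E1, of "C1 DIM('a)"] C1 by (simp add: abs_divide)
  then have "\<bar>E1 / C1 DIM('a)\<bar> \<le> error_const DIM('a) * exp (- R / error_const DIM('a))"
    using exp_half_le_error_const(2)[of R "DIM('a)"] R by linarith
  moreover have "\<bar>\<epsilon>\<bar> \<le> error_const DIM('a) * r_eta DIM('a) L \<phi> \<eta> powr (real DIM('a) - 4)"
  proof -
    have "expansion_const DIM('a) \<le> error_const DIM('a)" "error_const DIM('a) \<ge> 0"
      by (auto simp: error_const_def)
    then have "expansion_const DIM('a) * r_eta DIM('a) L \<phi> \<eta> powr (real DIM('a) - 4)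
        \<le> error_const DIM('a) * r_eta DIM('a) L \<phi> \<eta> powr (real DIM('a) - 4)"
      by (intro mult_right_mono) auto
    then show ?thesis using \<epsilon> \<open>error_const DIM('a) \<ge> 0\<close> by (auto split: if_splits)
  qed
  ultimately show ?thesis
    using \<alpha> by (intro exI[of _ "E1 / C1 DIM('a)"] exI[of _ \<epsilon>]) simp
qed

end

theorem lemma3p3:
  fixes vR :: "real \<Rightarrow> real \<Rightarrow> real" and \<xi> :: real
  assumes dim: "DIM('a::euclidean_space) \<ge> 2"
    and vR: "admissible_vR vR"
    and xi: "\<xi> > 0"
  shows "\<exists>C R0 L0 \<phi>0. C > 0 \<and> R0 > 0 \<and> \<phi>0 > 0 \<and>
    (\<forall>L \<phi> R \<eta>.
       L \<ge> L0 \<and> 0 < \<phi> \<and> \<phi> \<le> \<phi>0 \<and> \<phi> \<ge> \<xi> * L powr (- real DIM('a) / (real DIM('a) + 1))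
       \<and> R \<ge> R0 \<and> 0 \<le> \<eta> \<and> \<eta> \<le> 1
       \<and> R \<le> r_eta DIM('a) L \<phi> \<eta> \<and> r_eta DIM('a) L \<phi> \<eta> \<le> r_eta DIM('a) L \<phi> 1
     \<longrightarrow>
       (let d = DIM('a); r = r_eta d L \<phi> \<eta>;
            I = integral (torus_box L :: 'a set) (\<lambda>x. vR R (norm x - r)) in
        C1 d > 0
        \<and> (\<exists>E1 \<epsilon>. I = L ^ d * (-1 + \<phi> * \<eta>) + r powr (real d - 2) * (C1 d + E1) + \<epsilon>
               \<and> \<bar>E1\<bar> \<le> C * exp (- R / C)
               \<and> (if d \<le> 3 then \<bar>\<epsilon>\<bar> \<le> C * exp (- R / C)
                  else \<bar>\<epsilon>\<bar> \<le> C * r powr (real d - 4)))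
        \<and> (\<forall>\<alpha>. (1 / L ^ d) * integral (torus_box L :: 'a set) (\<lambda>x. vR R (norm x - r) + \<alpha>) = -1 + \<phi>
               \<longrightarrow> (\<exists>E2 E3. \<alpha> = \<phi> * (1 - \<eta>) - C1 d / L ^ d * r powr (real d - 2) * (1 + E2)
                                 - E3 / L ^ d
                          \<and> \<bar>E2\<bar> \<le> C * exp (- R / C)
                          \<and> \<bar>E3\<bar> \<le> C * r powr (real d - 4)))))"
proof -
  have "error_const DIM('a) > 0" by (simp add: error_const_def)
  moreover have "phi_max DIM('a) > 0" using dim by (intro phi_max_pos) simp
  ultimately show ?thesis
    unfolding Let_def
    using C1_pos[OF dim] integral_cutoff_profile_error[OF dim vR] mass_constant_expansion[OF dim vR]
    by (intro exI[of _ "error_const DIM('a)"] exI[of _ 1] exI[of _ "1::real"] exI[of _ "phi_max DIM('a)"]) auto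
qed

end
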